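(* A rooted labeled forest that avoids $123$ avoids $2413$ if and only if it is a $P_1$-forest.
   Context: Rooted labeled forests are unordered forests with a distinguished root in each component and distinct integer labels $L(v)$. The ancestors of $v$ are the vertices on the path from the root of its component to $v$ (including $v$). An instance of a pattern $\pi$ of length $k$ is a sequence $v_1,\dots,v_k$ with $v_i$ a strict ancestor of $v_{i+1}$ and labels in the same relative order as $\pi$; a forest avoids $\pi$ if it has no instance. A vertex $v$ is a top-down minimum (TDM) if $L(u)\ge L(v)$ for every ancestor $u$ of $v$; other vertices are non-TDM. A non-TDM vertex $v$ is special if the path from the root to $v$ contains vertices $v_1,v_2,v_3,v_4$ in that order (not necessarily consecutive) with $v_1,v_3$ TDM and $v_2,v_4$ non-TDM. The ceiling of a special vertex $v$ is its lowest ancestor $u$ such that the path from $u$ to $v$ contains vertices $v_1,v_2,v_3,v_4$ in that order with $v_1,v_3$ TDM and $v_2,v_4$ non-TDM. A $P_1$-forest is a forest in which every special vertex $v$ with ceiling $u$ satisfies $L(u)>L(v)$. *)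

theory Defs
  imports Main
begin

inductive anc :: "('a \<Rightarrow> 'a option) \<Rightarrow> 'a \<Rightarrow> 'a \<Rightarrow> bool" for par where
  anc_refl: "anc par v v"
| anc_step: "anc par u w \<Longrightarrow> par v = Some w \<Longrightarrow> anc par u v"

definition strict_anc :: "('a \<Rightarrow> 'a option) \<Rightarrow> 'a \<Rightarrow> 'a \<Rightarrow> bool" where
  "strict_anc par u v \<longleftrightarrow> anc par u v \<and> u \<noteq> v"

definition rooted_labeled_forest :: "'a set \<Rightarrow> ('a \<Rightarrow> 'a option) \<Rightarrow> ('a \<Rightarrow> int) \<Rightarrow> bool" where
  "rooted_labeled_forest V par L \<longleftrightarrow>
     finite V
   \<and> (\<forall>v\<in>V. \<forall>u. par v = Some u \<longrightarrow> u \<in> V)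
   \<and> (\<forall>v\<in>V. \<exists>r. anc par r v \<and> par r = None)
   \<and> inj_on L V"

definition is_instance :: "'a set \<Rightarrow> ('a \<Rightarrow> 'a option) \<Rightarrow> ('a \<Rightarrow> int) \<Rightarrow> nat list \<Rightarrow> 'a list \<Rightarrow> bool" where
  "is_instance V par L pi vs \<longleftrightarrow>
     length vs = length pi
   \<and> set vs \<subseteq> V
   \<and> (\<forall>i. Suc i < length vs \<longrightarrow> strict_anc par (vs ! i) (vs ! Suc i))
   \<and> (\<forall>i<length vs. \<forall>j<length vs. L (vs ! i) < L (vs ! j) \<longleftrightarrow> pi ! i < pi ! j)"

definition avoids :: "'a set \<Rightarrow> ('a \<Rightarrow> 'a option) \<Rightarrow> ('a \<Rightarrow> int) \<Rightarrow> nat list \<Rightarrow> bool" where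
  "avoids V par L pi \<longleftrightarrow> \<not> (\<exists>vs. is_instance V par L pi vs)"

definition tdm :: "'a set \<Rightarrow> ('a \<Rightarrow> 'a option) \<Rightarrow> ('a \<Rightarrow> int) \<Rightarrow> 'a \<Rightarrow> bool" where
  "tdm V par L v \<longleftrightarrow> v \<in> V \<and> (\<forall>u. anc par u v \<longrightarrow> L u \<ge> L v)"

definition non_tdm :: "'a set \<Rightarrow> ('a \<Rightarrow> 'a option) \<Rightarrow> ('a \<Rightarrow> int) \<Rightarrow> 'a \<Rightarrow> bool" where
  "non_tdm V par L v \<longleftrightarrow> v \<in> V \<and> \<not> tdm V par L v"

definition alt_pattern :: "'a set \<Rightarrow> ('a \<Rightarrow> 'a option) \<Rightarrow> ('a \<Rightarrow> int) \<Rightarrow> 'a \<Rightarrow> 'a \<Rightarrow> bool" where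
  "alt_pattern V par L u v \<longleftrightarrow>
     (\<exists>v1 v2 v3 v4. anc par u v1 \<and> anc par v1 v2 \<and> anc par v2 v3 \<and> anc par v3 v4 \<and> anc par v4 v
        \<and> tdm V par L v1 \<and> non_tdm V par L v2 \<and> tdm V par L v3 \<and> non_tdm V par L v4)"

definition special :: "'a set \<Rightarrow> ('a \<Rightarrow> 'a option) \<Rightarrow> ('a \<Rightarrow> int) \<Rightarrow> 'a \<Rightarrow> bool" where
  "special V par L v \<longleftrightarrow> non_tdm V par L v
     \<and> (\<exists>r. anc par r v \<and> par r = None \<and> alt_pattern V par L r v)"

definition is_ceiling :: "'a set \<Rightarrow> ('a \<Rightarrow> 'a option) \<Rightarrow> ('a \<Rightarrow> int) \<Rightarrow> 'a \<Rightarrow> 'a \<Rightarrow> bool" where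
  "is_ceiling V par L u v \<longleftrightarrow> anc par u v \<and> alt_pattern V par L u v
     \<and> (\<forall>w. anc par w v \<and> alt_pattern V par L w v \<longrightarrow> anc par w u)"

definition P1_forest :: "'a set \<Rightarrow> ('a \<Rightarrow> 'a option) \<Rightarrow> ('a \<Rightarrow> int) \<Rightarrow> bool" where
  "P1_forest V par L \<longleftrightarrow>
     (\<forall>v\<in>V. special V par L v \<longrightarrow> (\<forall>u. is_ceiling V par L u v \<longrightarrow> L u > L v))"

end

theory Submission
  imports Defs
begin

text \<open>In a 123-avoiding forest every vertex having a strict descendant with a larger label is
  a top-down minimum; equivalently, a non-TDM vertex is larger than all its strict descendants.
  Hence an occurrence \<open>x\<^sub>1 x\<^sub>2 x\<^sub>3 x\<^sub>4\<close> of 2413 alternates TDM, non-TDM, TDM, non-TDM, so \<open>x\<^sub>4\<close> is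
  special; its ceiling lies weakly below \<open>x\<^sub>1\<close> and is itself a TDM, so its label is at most
  \<open>L x\<^sub>1 < L x\<^sub>4\<close> and the forest is not a \<open>P\<^sub>1\<close>-forest. Conversely, if a special \<open>v\<close> has
  ceiling \<open>u\<close> with \<open>L u \<le> L v\<close>, the alternating vertices \<open>v\<^sub>1 v\<^sub>2 v\<^sub>3\<close> below \<open>u\<close> together
  with \<open>v\<close> form a 2413.\<close>

lemma anc_trans: "anc par a b \<Longrightarrow> anc par b c \<Longrightarrow> anc par a c"
  by (rotate_tac, induction rule: anc.induct) (auto intro: anc.intros)

lemma parent_neq_self_below_root: "anc par r x \<Longrightarrow> par r = None \<Longrightarrow> par x \<noteq> Some x"
  by (induction rule: anc.induct) auto

lemma anc_antisym_below_root:
  assumes "anc par r x" "par r = None" "anc par u x" "anc par x u"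
  shows "u = x"
  using assms
proof (induction arbitrary: u rule: anc.induct)
  case (anc_refl r)
  from \<open>anc par u r\<close> \<open>par r = None\<close> show ?case by (cases rule: anc.cases) auto
next
  case (anc_step r w v)
  show "u = v"
  proof (rule ccontr)
    assume "u \<noteq> v"
    with \<open>anc par u v\<close> \<open>par v = Some w\<close> have "anc par u w"
      by (cases rule: anc.cases) auto
    with \<open>anc par v u\<close> have "anc par v w" by (rule anc_trans)
    moreover have "anc par w v" using \<open>par v = Some w\<close> by (rule anc.anc_step[OF anc.anc_refl])
    ultimately have "v = w" using anc_step.IH \<open>par r = None\<close> by blast
    with anc_step.hyps \<open>par r = None\<close> show False
      using parent_neq_self_below_root by fastforce
  qed
qed

lemma forest_anc_antisym:
  "rooted_labeled_forest V par L \<Longrightarrow> x \<in> V \<Longrightarrow> anc par u x \<Longrightarrow> anc par x u \<Longrightarrow> u = x"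
  unfolding rooted_labeled_forest_def by (metis anc_antisym_below_root)

lemma forest_anc_closed:
  "anc par u v \<Longrightarrow> rooted_labeled_forest V par L \<Longrightarrow> v \<in> V \<Longrightarrow> u \<in> V"
  by (induction rule: anc.induct) (auto simp: rooted_labeled_forest_def)

lemma forest_strict_anc_anc_trans:
  assumes "rooted_labeled_forest V par L" "c \<in> V" "strict_anc par a b" "anc par b c"
  shows "strict_anc par a c"
  using assms forest_anc_antisym[of V par L b a] forest_anc_closed[of par b c V L]
  unfolding strict_anc_def by (metis anc_trans)

lemma ex_lowest_anc:
  "anc par a x \<Longrightarrow> Q a \<Longrightarrow> \<exists>u. anc par u x \<and> Q u \<and> (\<forall>w. anc par w x \<and> Q w \<longrightarrow> anc par w u)"
proof (induction rule: anc.induct)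
  case (anc_refl x)
  then show ?case by (metis anc.anc_refl)
next
  case (anc_step a y x)
  show ?case
  proof (cases "Q x")
    case True
    then show ?thesis by (metis anc.anc_refl)
  next
    case False
    from anc_step obtain u where u: "anc par u y" "Q u" "\<forall>w. anc par w y \<and> Q w \<longrightarrow> anc par w u"
      by blast
    have "anc par w u" if "anc par w x" "Q w" for w
      using that(1) proof (cases rule: anc.cases)
      case anc_refl
      with False \<open>Q w\<close> show ?thesis by simp
    next
      case (anc_step w')
      with \<open>par x = Some y\<close> \<open>Q w\<close> u(3) show ?thesis by simp
    qed
    with u anc_step.hyps(2) show ?thesis by (metis anc.anc_step)
  qed
qed

lemma is_instance_123_iff:
  "is_instance V par L [1, 2, 3] [a, b, c] \<longleftrightarrow>
     {a, b, c} \<subseteq> V \<and> strict_anc par a b \<and> strict_anc par b c \<and> L a < L b \<and> L b < L c"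
  unfolding is_instance_def by (simp add: less_Suc_eq numeral_eq_Suc all_conj_distrib) linarith

lemma is_instance_2413_iff:
  "is_instance V par L [2, 4, 1, 3] [a, b, c, d] \<longleftrightarrow>
     {a, b, c, d} \<subseteq> V \<and> strict_anc par a b \<and> strict_anc par b c \<and> strict_anc par c d
     \<and> L c < L a \<and> L a < L d \<and> L d < L b"
  unfolding is_instance_def by (simp add: less_Suc_eq numeral_eq_Suc all_conj_distrib) linarith

lemma is_instance_length: "is_instance V par L pi vs \<Longrightarrow> length vs = length pi"
  unfolding is_instance_def by simp

lemma avoids_123_iff:
  "avoids V par L [1, 2, 3] \<longleftrightarrow>
     \<not> (\<exists>a b c. {a, b, c} \<subseteq> V \<and> strict_anc par a b \<and> strict_anc par b c \<and> L a < L b \<and> L b < L c)"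
proof -
  have "\<exists>a b c. vs = [a, b, c]" if "is_instance V par L [1, 2, 3] vs" for vs
  proof -
    have "length vs = 3" using is_instance_length[OF that] by simp
    then show ?thesis by (simp add: length_Suc_conv numeral_eq_Suc) blast
  qed
  then have "(\<exists>vs. is_instance V par L [1, 2, 3] vs) \<longleftrightarrow> (\<exists>a b c. is_instance V par L [1, 2, 3] [a, b, c])"
    by blast
  then show ?thesis unfolding avoids_def is_instance_123_iff by (simp only:)
qed

lemma avoids_2413_iff:
  "avoids V par L [2, 4, 1, 3] \<longleftrightarrow>
     \<not> (\<exists>a b c d. {a, b, c, d} \<subseteq> V \<and> strict_anc par a b \<and> strict_anc par b c \<and> strict_anc par c d
       \<and> L c < L a \<and> L a < L d \<and> L d < L b)"
proof -
  have "\<exists>a b c d. vs = [a, b, c, d]" if "is_instance V par L [2, 4, 1, 3] vs" for vs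
  proof -
    have "length vs = 4" using is_instance_length[OF that] by simp
    then show ?thesis by (simp add: length_Suc_conv numeral_eq_Suc) blast
  qed
  then have "(\<exists>vs. is_instance V par L [2, 4, 1, 3] vs) \<longleftrightarrow>
      (\<exists>a b c d. is_instance V par L [2, 4, 1, 3] [a, b, c, d])"
    by blast
  then show ?thesis unfolding avoids_def is_instance_2413_iff by (simp only:)
qed

lemma tdm_le_anc: "tdm V par L v \<Longrightarrow> anc par u v \<Longrightarrow> L v \<le> L u"
  unfolding tdm_def by blast

lemma tdm_non_tdm_neq: "tdm V par L u \<Longrightarrow> non_tdm V par L v \<Longrightarrow> u \<noteq> v"
  unfolding non_tdm_def by blast

lemma non_tdmI: "v \<in> V \<Longrightarrow> anc par u v \<Longrightarrow> L u < L v \<Longrightarrow> non_tdm V par L v"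
  unfolding non_tdm_def tdm_def by (meson not_le)

lemma tdm_if_less_descendant:
  assumes forest: "rooted_labeled_forest V par L" and "avoids V par L [1, 2, 3]"
    and "b \<in> V" "strict_anc par a b" "L a < L b"
  shows "tdm V par L a"
proof -
  have "a \<in> V" using assms(3,4) forest_anc_closed[OF _ forest] unfolding strict_anc_def by blast
  moreover have "L a \<le> L w" if "anc par w a" for w
  proof (rule ccontr)
    assume "\<not> L a \<le> L w"
    then have "L w < L a" by simp
    moreover have "w \<in> V" using \<open>anc par w a\<close> \<open>a \<in> V\<close> forest_anc_closed[OF _ forest] by blast
    moreover have "strict_anc par w a" using that \<open>L w < L a\<close> unfolding strict_anc_def by auto
    ultimately show False using assms(2-5) \<open>a \<in> V\<close> unfolding avoids_123_iff by blast
  qed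
  ultimately show ?thesis unfolding tdm_def by blast
qed

lemma alt_patternI:
  "anc par u v1 \<Longrightarrow> anc par v1 v2 \<Longrightarrow> anc par v2 v3 \<Longrightarrow> anc par v3 v4 \<Longrightarrow> anc par v4 v
   \<Longrightarrow> tdm V par L v1 \<Longrightarrow> non_tdm V par L v2 \<Longrightarrow> tdm V par L v3 \<Longrightarrow> non_tdm V par L v4
   \<Longrightarrow> alt_pattern V par L u v"
  unfolding alt_pattern_def by blast

lemma alt_pattern_anc_mono:
  assumes "anc par w u" "alt_pattern V par L u v"
  shows "alt_pattern V par L w v"
  using assms(2) anc_trans[OF assms(1)] unfolding alt_pattern_def by blast

lemma ex_ceiling:
  assumes "anc par u v" "alt_pattern V par L u v"
  shows "\<exists>c. is_ceiling V par L c v \<and> anc par u c"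
proof -
  obtain c where "anc par c v" "alt_pattern V par L c v"
    and lowest: "\<forall>w. anc par w v \<and> alt_pattern V par L w v \<longrightarrow> anc par w c"
    using ex_lowest_anc[of par u v "\<lambda>w. alt_pattern V par L w v", OF assms] by blast
  then have "is_ceiling V par L c v" unfolding is_ceiling_def by blast
  moreover have "anc par u c" using lowest assms by blast
  ultimately show ?thesis by blast
qed

lemma ceiling_tdm:
  assumes forest: "rooted_labeled_forest V par L" and ceiling: "is_ceiling V par L u v"
  shows "tdm V par L u"
proof -
  from ceiling obtain v1 v2 v3 v4 where
    path: "anc par u v1" "anc par v1 v2" "anc par v2 v3" "anc par v3 v4" "anc par v4 v"
    and kinds: "tdm V par L v1" "non_tdm V par L v2" "tdm V par L v3" "non_tdm V par L v4"
    unfolding is_ceiling_def alt_pattern_def by blast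
  have "alt_pattern V par L v1 v"
    using alt_patternI[OF anc.anc_refl path(2-5) kinds] .
  moreover have "anc par v1 v" using path(2-5) anc_trans by metis
  ultimately have "anc par v1 u" using ceiling unfolding is_ceiling_def by blast
  moreover have "v1 \<in> V" using kinds(1) unfolding tdm_def by blast
  ultimately have "u = v1" using forest_anc_antisym[OF forest _ path(1)] by blast
  with kinds(1) show ?thesis by simp
qed

lemma not_avoids_2413_if_alt_pattern:
  assumes forest: "rooted_labeled_forest V par L" and no123: "avoids V par L [1, 2, 3]"
    and "alt_pattern V par L u v" "non_tdm V par L v" "L u \<le> L v"
  shows "\<not> avoids V par L [2, 4, 1, 3]"
proof -
  from assms(3) obtain v1 v2 v3 v4 where
    path: "anc par u v1" "anc par v1 v2" "anc par v2 v3" "anc par v3 v4" "anc par v4 v"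
    and kinds: "tdm V par L v1" "non_tdm V par L v2" "tdm V par L v3" "non_tdm V par L v4"
    unfolding alt_pattern_def by blast
  have in_V: "v1 \<in> V" "v2 \<in> V" "v3 \<in> V" "v \<in> V"
    using kinds assms(4) unfolding tdm_def non_tdm_def by blast+
  have inj: "inj_on L V" using forest unfolding rooted_labeled_forest_def by blast
  have "anc par v3 v" using path(4,5) by (rule anc_trans)
  have s12: "strict_anc par v1 v2" and s23: "strict_anc par v2 v3" and s3v: "strict_anc par v3 v"
    using path(2,3) \<open>anc par v3 v\<close> kinds assms(4) tdm_non_tdm_neq unfolding strict_anc_def by metis+
  have s13: "strict_anc par v1 v3" using forest_strict_anc_anc_trans[OF forest in_V(3) s12 path(3)] .
  have s2v: "strict_anc par v2 v"
    using forest_strict_anc_anc_trans[OF forest in_V(4) s23 \<open>anc par v3 v\<close>] .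
  have "L v1 < L v"
    using tdm_le_anc[OF kinds(1) path(1)] \<open>L u \<le> L v\<close> tdm_non_tdm_neq[OF kinds(1) assms(4)]
      inj_on_eq_iff[OF inj in_V(1,4)] by linarith
  moreover have "L v3 < L v1"
    using s13 tdm_le_anc[OF kinds(3)] inj_on_eq_iff[OF inj in_V(1,3)]
    unfolding strict_anc_def by force
  moreover have "L v < L v2"
  proof (rule ccontr)
    assume "\<not> L v < L v2"
    then have "L v2 < L v" using s2v inj_on_eq_iff[OF inj in_V(2,4)] unfolding strict_anc_def by force
    then have "tdm V par L v2" using tdm_if_less_descendant[OF forest no123 in_V(4) s2v] by blast
    with kinds(2) show False unfolding non_tdm_def by blast
  qed
  ultimately show ?thesis
    using in_V s12 s23 s3v unfolding avoids_2413_iff by blast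
qed

lemma not_P1_forest_if_not_avoids_2413:
  assumes forest: "rooted_labeled_forest V par L" and no123: "avoids V par L [1, 2, 3]"
    and "\<not> avoids V par L [2, 4, 1, 3]"
  shows "\<not> P1_forest V par L"
proof -
  from assms(3) obtain x1 x2 x3 x4 where
    in_V: "x1 \<in> V" "x2 \<in> V" "x3 \<in> V" "x4 \<in> V"
    and chain: "strict_anc par x1 x2" "strict_anc par x2 x3" "strict_anc par x3 x4"
    and labels: "L x3 < L x1" "L x1 < L x4" "L x4 < L x2"
    unfolding avoids_2413_iff by auto
  have anc: "anc par x1 x2" "anc par x2 x3" "anc par x3 x4"
    using chain unfolding strict_anc_def by blast+
  have kinds: "tdm V par L x1" "non_tdm V par L x2" "tdm V par L x3" "non_tdm V par L x4"
    using tdm_if_less_descendant[OF forest no123 in_V(2) chain(1)]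
      tdm_if_less_descendant[OF forest no123 in_V(4) chain(3)]
      non_tdmI[OF in_V(2) anc(1)] non_tdmI[OF in_V(4) anc(3)] labels by simp_all
  have alt: "alt_pattern V par L x1 x4"
    using alt_patternI[OF anc.anc_refl anc anc.anc_refl kinds] .
  have "anc par x1 x4" using anc by (meson anc_trans)
  obtain r where r: "anc par r x1" "par r = None"
    using forest in_V(1) unfolding rooted_labeled_forest_def by blast
  have "special V par L x4"
    unfolding special_def using kinds(4) r alt_pattern_anc_mono[OF r(1) alt]
      anc_trans[OF r(1) \<open>anc par x1 x4\<close>] by blast
  moreover obtain u where ceiling: "is_ceiling V par L u x4" and "anc par x1 u"
    using ex_ceiling[OF \<open>anc par x1 x4\<close> alt] by blast
  moreover have "L u < L x4"
    using tdm_le_anc[OF ceiling_tdm[OF forest ceiling] \<open>anc par x1 u\<close>] labels(2) by simp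
  ultimately show ?thesis unfolding P1_forest_def using in_V(4) by (meson not_less_iff_gr_or_eq)
qed

theorem lemma3p9:
  fixes V :: "'a set" and par :: "'a \<Rightarrow> 'a option" and L :: "'a \<Rightarrow> int"
  assumes "rooted_labeled_forest V par L"
    and "avoids V par L [1, 2, 3]"
  shows "avoids V par L [2, 4, 1, 3] \<longleftrightarrow> P1_forest V par L"
proof
  assume no2413: "avoids V par L [2, 4, 1, 3]"
  show "P1_forest V par L"
    unfolding P1_forest_def
  proof (intro ballI impI allI)
    fix v u
    assume "special V par L v" "is_ceiling V par L u v"
    then have "alt_pattern V par L u v" "non_tdm V par L v"
      unfolding special_def is_ceiling_def by blast+
    then show "L v < L u"
      using not_avoids_2413_if_alt_pattern[OF assms] no2413 by (meson not_le)
  qed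
next
  assume "P1_forest V par L"
  then show "avoids V par L [2, 4, 1, 3]"
    using not_P1_forest_if_not_avoids_2413[OF assms] by blast
qed

end
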